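(* The Brier-score data collecting mechanism described in the context is individually rational, truthful, budget feasible, and symmetric.
   Context: A data analyst with budget $B$ buys data from $n$ data providers. Provider $i$ holds a dataset $D_i$ whose points are i.i.d. conditioned on unknown parameters $\boldsymbol{\theta}$; datasets are independent conditioned on $\boldsymbol{\theta}$. Here the analyst knows $p(D_i\mid\boldsymbol{\theta})$ and the prior, so she can compute $p(D_{-i}\mid D_i)$ for every possible $D_{-i}$ (the datasets of all providers other than $i$). The mechanism: (1) all providers report datasets $\tilde D_1,\dots,\tilde D_n$; (2) for all possible $D_{-i}$ compute $p(D_{-i}\mid\tilde D_i)$; (3) the score for provider $i$ is $s_i=1-\frac{1}{|D_{-i}|}\sum_{D_{-i}}\big(p(D_{-i}\mid\tilde D_i)-\mathbb{I}[D_{-i}=\tilde D_{-i}]\big)^2$, where the sum is over all possible $D_{-i}$, $|D_{-i}|$ is the number of possible $D_{-i}$, and $\mathbb{I}[D_{-i}=\tilde D_{-i}]$ is $1$ if $D_{-i}$ equals the reported $\tilde D_{-i}$ and $0$ otherwise; (4) the payment is $r_i=\frac{B\cdot s_i}{n}$. Definitions: truthful means that for any underlying distribution, every $i$ and every $D_i$, when all others report truthfully, $\mathbb{E}_{D_{-i}\sim p(D_{-i}\mid D_i)}[r_i(D_i,D_{-i})]\ge \mathbb{E}_{D_{-i}\sim p(D_{-i}\mid D_i)}[r_i(D_i',D_{-i})]$ for all $D_i'$; individually rational means $r_i\ge0$ always; budget feasible means $\sum_i r_i\le B$ always; symmetric means $r_i(D_1,\dots,D_n)=r_{\pi(i)}(D_{\pi(1)},\dots,D_{\pi(n)})$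 for every permutation $\pi$. *)

theory Defs
  imports "HOL-Probability.Probability"
begin

text \<open>
A dataset is an element of a finite type 'd
(the finitely many possible datasets). The unknown parameters theta range over a
type 't carrying a prior probability measure M. The likelihood of a dataset D
given theta is L theta D; datasets are independent conditioned on theta, so the
joint probability of a profile D (a function from provider indices to datasets) is
the integral over the prior of the product of the likelihoods.
\<close>

definition joint_prob :: "'t measure \<Rightarrow> ('t \<Rightarrow> 'd \<Rightarrow> real) \<Rightarrow> nat \<Rightarrow> (nat \<Rightarrow> 'd) \<Rightarrow> real" where
  "joint_prob M L n D = (\<integral>\<theta>. (\<Prod>j<n. L \<theta> (D j)) \<partial>M)"

definition others :: "nat \<Rightarrow> nat \<Rightarrow> (nat \<Rightarrow> 'd) set" where
  "others n i = PiE ({..<n} - {i}) (\<lambda>_. UNIV)"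

definition marg_prob :: "'t measure \<Rightarrow> ('t \<Rightarrow> 'd \<Rightarrow> real) \<Rightarrow> nat \<Rightarrow> nat \<Rightarrow> 'd \<Rightarrow> real" where
  "marg_prob M L n i d = (\<Sum>Dm\<in>others n i. joint_prob M L n (Dm(i := d)))"

definition cond_prob :: "'t measure \<Rightarrow> ('t \<Rightarrow> 'd \<Rightarrow> real) \<Rightarrow> nat \<Rightarrow> nat \<Rightarrow> 'd \<Rightarrow> (nat \<Rightarrow> 'd) \<Rightarrow> real" where
  "cond_prob M L n i d Dm = joint_prob M L n (Dm(i := d)) / marg_prob M L n i d"

definition brier_score :: "'t measure \<Rightarrow> ('t \<Rightarrow> 'd \<Rightarrow> real) \<Rightarrow> nat \<Rightarrow> nat \<Rightarrow> (nat \<Rightarrow> 'd) \<Rightarrow> real" where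
  "brier_score M L n i D = 1 - (1 / real (card (others n i :: (nat \<Rightarrow> 'd) set))) *
     (\<Sum>Dm\<in>others n i. (cond_prob M L n i (D i) Dm -
        (if Dm = restrict D ({..<n} - {i}) then 1 else 0))\<^sup>2)"

definition payment :: "real \<Rightarrow> 't measure \<Rightarrow> ('t \<Rightarrow> 'd \<Rightarrow> real) \<Rightarrow> nat \<Rightarrow> nat \<Rightarrow> (nat \<Rightarrow> 'd) \<Rightarrow> real" where
  "payment B M L n i D = B * brier_score M L n i D / real n"

end

theory Submission
  imports Defs
begin

text \<open>
  The Brier score of provider i is 1 minus the normalised quadratic loss of the predicted
  distribution p(. | D_i) on the realised D_{-i}; this loss lies in [0, |D_{-i}|], which gives
  individual rationality and budget feasibility. Under a belief q, the expected quadratic loss of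
  a report p exceeds that of the report q by the squared distance between p and q, so reporting
  the true D_i minimises the expected loss, and the payment is a non-increasing affine function of
  that loss. Symmetry holds because relabelling the providers by a permutation leaves the product
  of the likelihoods, hence the joint distribution, unchanged, and precomposition with the
  permutation is a bijection between the spaces of D_{-i} and D_{-\<pi>(i)}.
\<close>

definition quadratic_loss :: "'a set \<Rightarrow> ('a \<Rightarrow> real) \<Rightarrow> 'a \<Rightarrow> real" where
  "quadratic_loss S p x = (\<Sum>E\<in>S. (p E - (if E = x then 1 else 0))\<^sup>2)"

lemma quadratic_loss_eq:
  assumes "finite S" "x \<in> S"
  shows "quadratic_loss S p x = (\<Sum>E\<in>S. (p E)\<^sup>2) - 2 * p x + 1"
proof -
  have "quadratic_loss S p x
      = (\<Sum>E\<in>S. (p E)\<^sup>2 - 2 * (if E = x then p E else 0) + (if E = x then 1 else 0))"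
    unfolding quadratic_loss_def by (rule sum.cong) (auto simp: power2_eq_square algebra_simps)
  also have "\<dots> = (\<Sum>E\<in>S. (p E)\<^sup>2) - 2 * p x + 1"
    using assms by (simp add: sum.distrib sum_subtractf sum_distrib_left[symmetric] sum.delta)
  finally show ?thesis .
qed

lemma quadratic_loss_le_card:
  assumes "\<And>E. E \<in> S \<Longrightarrow> 0 \<le> p E \<and> p E \<le> 1"
  shows "quadratic_loss S p x \<le> card S"
proof -
  have "(p E - (if E = x then 1 else 0))\<^sup>2 \<le> 1" if "E \<in> S" for E
    using assms[OF that] by (subst abs_square_le_1) auto
  then have "quadratic_loss S p x \<le> (\<Sum>E\<in>S. 1)"
    unfolding quadratic_loss_def by (rule sum_mono)
  then show ?thesis by simp
qed

lemma quadratic_loss_reindex: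
  assumes "bij_betw h T S" "y \<in> T"
  shows "quadratic_loss S p (h y) = quadratic_loss T (p \<circ> h) y"
proof -
  have "h z = h y \<longleftrightarrow> z = y" if "z \<in> T" for z
    using assms that by (meson bij_betw_imp_inj_on inj_on_eq_iff)
  then show ?thesis
    unfolding quadratic_loss_def sum.reindex_bij_betw[OF assms(1), symmetric]
    by (intro sum.cong) simp_all
qed

lemma expected_quadratic_loss_excess:
  assumes "finite S" "sum q S = 1"
  shows "(\<Sum>x\<in>S. q x * quadratic_loss S p x)
       = (\<Sum>x\<in>S. q x * quadratic_loss S q x) + (\<Sum>E\<in>S. (p E - q E)\<^sup>2)"
proof -
  have expected: "(\<Sum>x\<in>S. q x * quadratic_loss S r x)
      = (\<Sum>E\<in>S. (r E)\<^sup>2) - 2 * (\<Sum>E\<in>S. q E * r E) + 1" for r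
  proof -
    have "(\<Sum>x\<in>S. q x * quadratic_loss S r x)
        = (\<Sum>x\<in>S. q x * (\<Sum>E\<in>S. (r E)\<^sup>2) - 2 * (q x * r x) + q x)"
      by (rule sum.cong) (simp_all add: quadratic_loss_eq assms(1) algebra_simps)
    also have "\<dots> = (\<Sum>x\<in>S. q x) * (\<Sum>E\<in>S. (r E)\<^sup>2) - 2 * (\<Sum>x\<in>S. q x * r x)
        + (\<Sum>x\<in>S. q x)"
      by (simp only: sum.distrib sum_subtractf sum_distrib_left[symmetric]
          sum_distrib_right[symmetric])
    finally show ?thesis using assms(2) by simp
  qed
  have "(\<Sum>E\<in>S. (p E - q E)\<^sup>2) = (\<Sum>E\<in>S. (p E)\<^sup>2 - 2 * (q E * p E) + (q E)\<^sup>2)"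
    by (rule sum.cong) (simp_all add: power2_eq_square algebra_simps)
  then show ?thesis
    unfolding expected by (simp add: sum.distrib sum_subtractf sum_distrib_left power2_eq_square)
qed

lemma quadratic_loss_proper:
  assumes "finite S" "sum q S = 1"
  shows "(\<Sum>x\<in>S. q x * quadratic_loss S q x) \<le> (\<Sum>x\<in>S. q x * quadratic_loss S p x)"
  unfolding expected_quadratic_loss_excess[OF assms, of p] by (simp add: sum_nonneg)

lemma finite_others: "finite (others n i :: (nat \<Rightarrow> 'd::finite) set)"
  unfolding others_def by (rule finite_PiE) auto

lemma restrict_fun_upd_others:
  assumes "Dm \<in> others n i"
  shows "restrict (Dm(i := d)) ({..<n} - {i}) = Dm"
proof
  fix j
  show "restrict (Dm(i := d)) ({..<n} - {i}) j = Dm j"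
    using PiE_arb[OF assms[unfolded others_def], of j] by auto
qed

lemma brier_score_eq_quadratic_loss:
  fixes L :: "'t \<Rightarrow> 'd \<Rightarrow> real"
  shows "brier_score M L n i D = 1 - quadratic_loss (others n i) (cond_prob M L n i (D i))
     (restrict D ({..<n} - {i})) / card (others n i :: (nat \<Rightarrow> 'd) set)"
  unfolding brier_score_def quadratic_loss_def by simp

context
  fixes L :: "'t \<Rightarrow> 'd::finite \<Rightarrow> real"
  assumes L_nonneg: "\<And>\<theta> d. L \<theta> d \<ge> 0"
begin

lemma joint_prob_nonneg: "joint_prob M L n D \<ge> 0"
  unfolding joint_prob_def by (simp add: L_nonneg prod_nonneg)

lemma cond_prob_bounds:
  assumes "Dm \<in> others n i"
  shows "0 \<le> cond_prob M L n i d Dm \<and> cond_prob M L n i d Dm \<le> 1"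
proof -
  have "joint_prob M L n (Dm(i := d)) \<le> marg_prob M L n i d"
    unfolding marg_prob_def using assms
    by (intro member_le_sum) (simp_all add: joint_prob_nonneg finite_others)
  then show ?thesis
    unfolding cond_prob_def using joint_prob_nonneg[of M n "Dm(i := d)"]
    by (auto simp: divide_le_eq_1)
qed

lemma brier_score_bounds: "0 \<le> brier_score M L n i D \<and> brier_score M L n i D \<le> 1"
proof -
  let ?S = "others n i :: (nat \<Rightarrow> 'd) set"
  let ?loss = "quadratic_loss ?S (cond_prob M L n i (D i)) (restrict D ({..<n} - {i}))"
  have "?loss \<le> card ?S"
    by (rule quadratic_loss_le_card) (rule cond_prob_bounds)
  moreover have "?loss \<ge> 0"
    unfolding quadratic_loss_def by (simp add: sum_nonneg)
  ultimately show ?thesis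
    unfolding brier_score_eq_quadratic_loss by (cases "card ?S = 0") simp_all
qed

end

lemma sum_cond_prob:
  "marg_prob M L n i d \<noteq> 0 \<Longrightarrow> (\<Sum>Dm\<in>others n i. cond_prob M L n i d Dm) = 1"
  unfolding cond_prob_def by (simp add: sum_divide_distrib[symmetric] marg_prob_def[symmetric])

lemma payment_fun_upd_others:
  fixes L :: "'t \<Rightarrow> 'd \<Rightarrow> real"
  assumes "Dm \<in> others n i"
  shows "payment B M L n i (Dm(i := e)) = B / n
    - B / (n * card (others n i :: (nat \<Rightarrow> 'd) set))
      * quadratic_loss (others n i) (cond_prob M L n i e) Dm"
  unfolding payment_def brier_score_eq_quadratic_loss restrict_fun_upd_others[OF assms]
  by (cases "n = 0"; cases "card (others n i :: (nat \<Rightarrow> 'd) set) = 0")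
    (simp_all add: field_simps)

lemma expected_payment_truthful:
  fixes L :: "'t \<Rightarrow> 'd::finite \<Rightarrow> real"
  assumes "B \<ge> 0"
  shows "(\<Sum>Dm\<in>others n i. cond_prob M L n i d Dm * payment B M L n i (Dm(i := d')))
       \<le> (\<Sum>Dm\<in>others n i. cond_prob M L n i d Dm * payment B M L n i (Dm(i := d)))"
proof (cases "marg_prob M L n i d = 0")
  case True
  then show ?thesis by (simp add: cond_prob_def)
next
  case False
  let ?S = "others n i :: (nat \<Rightarrow> 'd) set"
  let ?q = "cond_prob M L n i d"
  let ?c = "B / (n * card ?S)"
  have expected_payment: "(\<Sum>Dm\<in>?S. ?q Dm * payment B M L n i (Dm(i := e)))
      = B / n * sum ?q ?S - ?c * (\<Sum>Dm\<in>?S. ?q Dm * quadratic_loss ?S (cond_prob M L n i e) Dm)"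
    for e
  proof -
    have "(\<Sum>Dm\<in>?S. ?q Dm * payment B M L n i (Dm(i := e)))
        = (\<Sum>Dm\<in>?S. B / n * ?q Dm - ?c * (?q Dm * quadratic_loss ?S (cond_prob M L n i e) Dm))"
      by (rule sum.cong) (simp_all add: payment_fun_upd_others algebra_simps)
    then show ?thesis by (simp add: sum_subtractf sum_distrib_left)
  qed
  have "(\<Sum>Dm\<in>?S. ?q Dm * quadratic_loss ?S ?q Dm)
      \<le> (\<Sum>Dm\<in>?S. ?q Dm * quadratic_loss ?S (cond_prob M L n i d') Dm)"
    using finite_others sum_cond_prob[OF False] by (rule quadratic_loss_proper)
  then have "?c * (\<Sum>Dm\<in>?S. ?q Dm * quadratic_loss ?S ?q Dm)
      \<le> ?c * (\<Sum>Dm\<in>?S. ?q Dm * quadratic_loss ?S (cond_prob M L n i d') Dm)"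
    using assms by (intro mult_left_mono) simp_all
  then show ?thesis
    unfolding expected_payment by linarith
qed

lemma bij_betw_restrict_comp_PiE:
  assumes "bij_betw g A B"
  shows "bij_betw (\<lambda>f. restrict (f \<circ> g) A) (PiE B (\<lambda>_. C)) (PiE A (\<lambda>_. C))"
proof (rule bij_betw_byWitness[where f' = "\<lambda>f. restrict (f \<circ> inv_into A g) B"])
  have inv: "bij_betw (inv_into A g) B A"
    using assms by (rule bij_betw_inv_into)
  show "\<forall>f\<in>PiE B (\<lambda>_. C). restrict (restrict (f \<circ> g) A \<circ> inv_into A g) B = f"
  proof (intro ballI ext)
    fix f y assume "f \<in> PiE B (\<lambda>_. C)"
    then show "restrict (restrict (f \<circ> g) A \<circ> inv_into A g) B y = f y"
      using PiE_arb[of f B _ y] bij_betwE[OF inv] bij_betw_inv_into_right[OF assms, of y] by auto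
  qed
  show "\<forall>f\<in>PiE A (\<lambda>_. C). restrict (restrict (f \<circ> inv_into A g) B \<circ> g) A = f"
  proof (intro ballI ext)
    fix f x assume "f \<in> PiE A (\<lambda>_. C)"
    then show "restrict (restrict (f \<circ> inv_into A g) B \<circ> g) A x = f x"
      using PiE_arb[of f A _ x] bij_betwE[OF assms] bij_betw_inv_into_left[OF assms, of x] by auto
  qed
  show "(\<lambda>f. restrict (f \<circ> g) A) ` PiE B (\<lambda>_. C) \<subseteq> PiE A (\<lambda>_. C)"
    using bij_betwE[OF assms] by auto
  show "(\<lambda>f. restrict (f \<circ> inv_into A g) B) ` PiE A (\<lambda>_. C) \<subseteq> PiE B (\<lambda>_. C)"
    using bij_betwE[OF inv] by auto
qed

lemma joint_prob_cong:
  assumes "\<And>j. j < n \<Longrightarrow> F j = G j"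
  shows "joint_prob M L n F = joint_prob M L n G"
proof -
  have "(\<lambda>\<theta>. \<Prod>j<n. L \<theta> (F j)) = (\<lambda>\<theta>. \<Prod>j<n. L \<theta> (G j))"
    using assms by (auto intro!: prod.cong)
  then show ?thesis
    unfolding joint_prob_def by simp
qed

lemma joint_prob_permute:
  assumes "\<pi> permutes {..<n}"
  shows "joint_prob M L n (F \<circ> \<pi>) = joint_prob M L n F"
proof -
  have "(\<Prod>j<n. L \<theta> ((F \<circ> \<pi>) j)) = (\<Prod>j<n. L \<theta> (F j))" for \<theta>
    using prod.permute[OF assms, of "\<lambda>j. L \<theta> (F j)"] by (simp add: comp_def)
  then show ?thesis
    unfolding joint_prob_def by simp
qed

lemma permutes_image_remove: "p permutes S \<Longrightarrow> p ` (S - {a}) = S - {p a}"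
  by (simp add: image_set_diff permutes_inj permutes_image)

context
  fixes \<pi> :: "nat \<Rightarrow> nat" and n :: nat and L :: "'t \<Rightarrow> 'd \<Rightarrow> real"
  assumes perm: "\<pi> permutes {..<n}"
begin

lemma bij_betw_others_permute:
  "bij_betw (\<lambda>E. restrict (E \<circ> \<pi>) ({..<n} - {i})) (others n (\<pi> i)) (others n i)"
proof -
  have "bij_betw \<pi> ({..<n} - {i}) ({..<n} - {\<pi> i})"
    using permutes_imp_bij[OF perm]
    by (rule bij_betw_subset) (auto simp: permutes_image_remove[OF perm])
  then show ?thesis
    unfolding others_def by (rule bij_betw_restrict_comp_PiE)
qed

lemma joint_prob_fun_upd_permute:
  "joint_prob M L n ((restrict (E \<circ> \<pi>) ({..<n} - {i}))(i := d)) = joint_prob M L n (E(\<pi> i := d))"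
proof -
  have "joint_prob M L n ((restrict (E \<circ> \<pi>) ({..<n} - {i}))(i := d))
      = joint_prob M L n (E(\<pi> i := d) \<circ> \<pi>)"
    using permutes_inj[OF perm] by (intro joint_prob_cong) (simp add: inj_eq)
  also have "\<dots> = joint_prob M L n (E(\<pi> i := d))"
    using perm by (rule joint_prob_permute)
  finally show ?thesis .
qed

lemma marg_prob_permute: "marg_prob M L n i d = marg_prob M L n (\<pi> i) d"
proof -
  have "marg_prob M L n i d
      = (\<Sum>E\<in>others n (\<pi> i). joint_prob M L n ((restrict (E \<circ> \<pi>) ({..<n} - {i}))(i := d)))"
    unfolding marg_prob_def by (rule sum.reindex_bij_betw[OF bij_betw_others_permute, symmetric])
  then show ?thesis
    unfolding joint_prob_fun_upd_permute marg_prob_def .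
qed

lemma cond_prob_permute:
  "cond_prob M L n i d (restrict (E \<circ> \<pi>) ({..<n} - {i})) = cond_prob M L n (\<pi> i) d E"
  unfolding cond_prob_def joint_prob_fun_upd_permute marg_prob_permute[where i = i] ..

lemma brier_score_permute: "brier_score M L n i (D \<circ> \<pi>) = brier_score M L n (\<pi> i) D"
proof -
  let ?h = "\<lambda>E. restrict (E \<circ> \<pi>) ({..<n} - {i})"
  let ?truth = "restrict D ({..<n} - {\<pi> i})"
  have bij: "bij_betw ?h (others n (\<pi> i)) (others n i :: (nat \<Rightarrow> 'd) set)"
    by (rule bij_betw_others_permute)
  have truth: "restrict (D \<circ> \<pi>) ({..<n} - {i}) = ?h ?truth"
    using permutes_image_remove[OF perm] by (intro restrict_compose_left[symmetric]) simp
  have "?truth \<in> others n (\<pi> i)"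
    unfolding others_def by simp
  then have "quadratic_loss (others n i) (cond_prob M L n i (D (\<pi> i))) (?h ?truth)
      = quadratic_loss (others n (\<pi> i)) (cond_prob M L n i (D (\<pi> i)) \<circ> ?h) ?truth"
    by (rule quadratic_loss_reindex[OF bij])
  also have "cond_prob M L n i (D (\<pi> i)) \<circ> ?h = cond_prob M L n (\<pi> i) (D (\<pi> i))"
    by (rule ext) (simp only: comp_apply cond_prob_permute)
  finally have loss: "quadratic_loss (others n i) (cond_prob M L n i (D (\<pi> i))) (?h ?truth)
      = quadratic_loss (others n (\<pi> i)) (cond_prob M L n (\<pi> i) (D (\<pi> i))) ?truth" .
  show ?thesis
    unfolding brier_score_eq_quadratic_loss comp_apply truth loss bij_betw_same_card[OF bij] ..
qed

end

theorem theorem6: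
  fixes B :: real and n :: nat
    and M :: "'t measure" and L :: "'t \<Rightarrow> 'd::finite \<Rightarrow> real"
  assumes B_nonneg: "B \<ge> 0"
    and prior: "prob_space M"
    and L_meas: "\<And>d. (\<lambda>\<theta>. L \<theta> d) \<in> borel_measurable M"
    and L_nonneg: "\<And>\<theta> d. L \<theta> d \<ge> 0"
    and L_sum: "\<And>\<theta>. (\<Sum>d\<in>UNIV. L \<theta> d) = 1"
  shows
    \<comment> \<open>individually rational\<close>
    "(\<forall>D. \<forall>i<n. payment B M L n i D \<ge> 0)
     \<comment> \<open>truthful\<close>
     \<and> (\<forall>i<n. \<forall>d d'.
          (\<Sum>Dm\<in>others n i. cond_prob M L n i d Dm * payment B M L n i (Dm(i := d)))
          \<ge> (\<Sum>Dm\<in>others n i. cond_prob M L n i d Dm * payment B M L n i (Dm(i := d'))))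
     \<comment> \<open>budget feasible\<close>
     \<and> (\<forall>D. (\<Sum>i<n. payment B M L n i D) \<le> B)
     \<comment> \<open>symmetric\<close>
     \<and> (\<forall>\<pi> D. \<pi> permutes {..<n} \<longrightarrow>
          (\<forall>i<n. payment B M L n i (D \<circ> \<pi>) = payment B M L n (\<pi> i) D))"
proof (intro conjI allI impI)
  have score_bounds: "0 \<le> brier_score M L n i D \<and> brier_score M L n i D \<le> 1" for i D
    by (rule brier_score_bounds) (rule L_nonneg)
  have payment_bounds: "0 \<le> payment B M L n i D \<and> payment B M L n i D \<le> B / n" for i D
    using score_bounds[of i D] B_nonneg unfolding payment_def by (auto intro: divide_right_mono mult_left_le)
  show "payment B M L n i D \<ge> 0" for i D
    using payment_bounds by blast
  show "(\<Sum>Dm\<in>others n i. cond_prob M L n i d Dm * payment B M L n i (Dm(i := d)))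
      \<ge> (\<Sum>Dm\<in>others n i. cond_prob M L n i d Dm * payment B M L n i (Dm(i := d')))" for i d d'
    using B_nonneg by (rule expected_payment_truthful)
  show "(\<Sum>i<n. payment B M L n i D) \<le> B" for D
  proof -
    have "(\<Sum>i<n. payment B M L n i D) \<le> (\<Sum>i<n. B / n)"
      using payment_bounds by (intro sum_mono) blast
    also have "\<dots> \<le> B"
      using B_nonneg by (cases "n = 0") simp_all
    finally show ?thesis .
  qed
  show "payment B M L n i (D \<circ> \<pi>) = payment B M L n (\<pi> i) D" if "\<pi> permutes {..<n}" for \<pi> D i
    unfolding payment_def brier_score_permute[OF that] ..
qed

end
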